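(* Let $\mathcal{X}$ be a Banach space (complex scalars) and $T \in \mathcal{L}(\mathcal{X})$. Suppose there is a subspace $Y \subset \mathcal{X}$ such that $T|_Y$ is an isomorphism (onto its image) and $d(Y, TY) > 0$. Then for every $\lambda \in \mathbb{C}$, $(T - \lambda I)|_Y$ is an isomorphism and $d(Y, (T - \lambda I)Y) > 0$.
   Context: For subspaces $\mathcal{U}, \mathcal{V}$ of a Banach space, $d(\mathcal{U},\mathcal{V}) = \inf\{\|u - v\| : u \in \mathcal{U}, \|u\|=1, v \in \mathcal{V}\}$. *)

theory Defs
  imports "HOL-Analysis.Analysis"
begin

text \<open>A complex Banach
space is modelled as a real Banach space (type class banach) together with a
complex scalar multiplication sc that extends the real one, is a module action,
and is compatible with the norm.\<close>

definition complex_scaling :: "(complex \<Rightarrow> 'a::real_normed_vector \<Rightarrow> 'a) \<Rightarrow> bool" where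
  "complex_scaling sc \<longleftrightarrow>
     (\<forall>a b x. sc (a + b) x = sc a x + sc b x) \<and>
     (\<forall>a x y. sc a (x + y) = sc a x + sc a y) \<and>
     (\<forall>a b x. sc a (sc b x) = sc (a * b) x) \<and>
     (\<forall>x. sc 1 x = x) \<and>
     (\<forall>r x. sc (complex_of_real r) x = r *\<^sub>R x) \<and>
     (\<forall>a x. norm (sc a x) = cmod a * norm x)"

definition bounded_clinear_op :: "(complex \<Rightarrow> 'a::real_normed_vector \<Rightarrow> 'a) \<Rightarrow> ('a \<Rightarrow> 'a) \<Rightarrow> bool" where
  "bounded_clinear_op sc T \<longleftrightarrow> bounded_linear T \<and> (\<forall>c x. T (sc c x) = sc c (T x))"

definition csubspace :: "(complex \<Rightarrow> 'a::real_normed_vector \<Rightarrow> 'a) \<Rightarrow> 'a set \<Rightarrow> bool" where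
  "csubspace sc Y \<longleftrightarrow> subspace Y \<and> (\<forall>c. \<forall>y\<in>Y. sc c y \<in> Y)"

definition iso_on :: "('a::real_normed_vector \<Rightarrow> 'a) \<Rightarrow> 'a set \<Rightarrow> bool" where
  "iso_on S Y \<longleftrightarrow> inj_on S Y \<and> (\<exists>C. \<forall>y\<in>Y. norm y \<le> C * norm (S y))"

definition subspace_gap :: "'a::real_normed_vector set \<Rightarrow> 'a set \<Rightarrow> real" where
  "subspace_gap U V = Inf {norm (u - v) | u v. u \<in> U \<and> norm u = 1 \<and> v \<in> V}"

end

theory Submission
  imports Defs
begin

text \<open>Write \<open>\<delta> = d(Y, TY) > 0\<close>. By homogeneity the gap gives
\<open>\<delta> \<parallel>w\<parallel> \<le> \<parallel>w - T z\<parallel>\<close> for \<open>w, z \<in> Y\<close>; together with the lower bound for \<open>T\<close> on \<open>Y\<close>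
this also controls \<open>\<parallel>z\<parallel>\<close> by \<open>\<parallel>w - T z\<parallel>\<close>. Since \<open>\<mu> Y \<subseteq> Y\<close>, taking \<open>w = \<mu> y\<close> bounds
\<open>T - \<mu>\<close> from below on \<open>Y\<close>, and taking \<open>w = u + \<mu> z\<close> gives \<open>\<parallel>u\<parallel> \<le> M \<parallel>u - (T - \<mu>) z\<parallel>\<close>,
i.e. \<open>d(Y, (T - \<mu>) Y) \<ge> 1/M\<close>.\<close>

lemma complex_scaling_linear:
  assumes "complex_scaling sc"
  shows "linear (sc a)"
proof -
  have add: "\<And>x y. sc a (x + y) = sc a x + sc a y"
    and compose: "\<And>a b x. sc a (sc b x) = sc (a * b) x"
    and real: "\<And>r x. sc (complex_of_real r) x = r *\<^sub>R x"
    using assms by (auto simp: complex_scaling_def)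
  have "sc a (r *\<^sub>R x) = r *\<^sub>R sc a x" for r x
    by (metis compose real mult.commute)
  with add show ?thesis
    by (intro linearI)
qed

lemma iso_on_nonneg_bound:
  assumes "iso_on S Y"
  obtains C where "C \<ge> 0" and "\<And>y. y \<in> Y \<Longrightarrow> norm y \<le> C * norm (S y)"
proof -
  obtain C where C: "\<forall>y\<in>Y. norm y \<le> C * norm (S y)"
    using assms by (auto simp: iso_on_def)
  have "norm y \<le> max C 0 * norm (S y)" if "y \<in> Y" for y
    using C that by (meson max.cobounded1 mult_right_mono norm_ge_zero order_trans)
  then show thesis
    using that[of "max C 0"] by simp
qed

lemma iso_onI:
  assumes "linear S" and "subspace Y"
    and "\<And>y. y \<in> Y \<Longrightarrow> norm y \<le> C * norm (S y)"
  shows "iso_on S Y"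
  unfolding iso_on_def
proof
  show "inj_on S Y"
  proof (rule inj_onI)
    fix x y assume "x \<in> Y" "y \<in> Y" "S x = S y"
    then have "norm (x - y) \<le> C * norm (S (x - y))"
      using assms by (simp add: subspace_diff)
    also have "S (x - y) = 0"
      using \<open>S x = S y\<close> by (simp add: linear_diff[OF \<open>linear S\<close>])
    finally show "x = y"
      by simp
  qed
qed (use assms in blast)

lemma subspace_gap_le:
  assumes "subspace U" "subspace V" "u \<in> U" "v \<in> V"
  shows "subspace_gap U V * norm u \<le> norm (u - v)"
proof (cases "u = 0")
  case False
  define n where "n = norm u"
  have "n > 0"
    using False by (simp add: n_def)
  have "u /\<^sub>R n \<in> U" "norm (u /\<^sub>R n) = 1" "v /\<^sub>R n \<in> V"
    using assms \<open>n > 0\<close> by (simp_all add: n_def subspace_scale)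
  then have "norm (u /\<^sub>R n - v /\<^sub>R n)
               \<in> {norm (u - v) | u v. u \<in> U \<and> norm u = 1 \<and> v \<in> V}"
    by blast
  then have "subspace_gap U V \<le> norm (u /\<^sub>R n - v /\<^sub>R n)"
    unfolding subspace_gap_def by (rule cInf_lower) (auto intro: bdd_belowI[of _ 0])
  also have "\<dots> = norm ((u - v) /\<^sub>R n)"
    by (simp add: scaleR_diff_right)
  also have "\<dots> = norm (u - v) / n"
    using \<open>n > 0\<close> by (simp add: divide_inverse_commute)
  finally show ?thesis
    using \<open>n > 0\<close> by (simp add: n_def pos_le_divide_eq)
qed simp

text \<open>If \<open>U\<close> has no unit vector, all gaps \<open>d(U, _)\<close> are the same junk value \<open>Inf {}\<close>,
so positivity is inherited from \<open>d(U, V)\<close>.\<close>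

lemma subspace_gap_posI:
  assumes "subspace_gap U V > 0" and "W \<noteq> {}" and "M > 0"
    and "\<And>u w. u \<in> U \<Longrightarrow> w \<in> W \<Longrightarrow> norm u \<le> M * norm (u - w)"
  shows "subspace_gap U W > 0"
proof (cases "\<exists>u\<in>U. norm u = 1")
  case True
  have "1 / M \<le> subspace_gap U W"
    unfolding subspace_gap_def
  proof (rule cInf_greatest)
    show "{norm (u - w) | u w. u \<in> U \<and> norm u = 1 \<and> w \<in> W} \<noteq> {}"
      using True \<open>W \<noteq> {}\<close> by blast
  next
    fix d assume "d \<in> {norm (u - w) | u w. u \<in> U \<and> norm u = 1 \<and> w \<in> W}"
    then obtain u w where "u \<in> U" "norm u = 1" "w \<in> W" "d = norm (u - w)"
      by blast
    with assms(4) \<open>M > 0\<close> show "1 / M \<le> d"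
      by (fastforce simp: field_simps)
  qed
  with \<open>M > 0\<close> show ?thesis
    by (metis divide_pos_pos less_le_trans zero_less_one)
next
  case False
  then have "{norm (u - v) | u v. u \<in> U \<and> norm u = 1 \<and> v \<in> W}
             = {norm (u - v) | u v. u \<in> U \<and> norm u = 1 \<and> v \<in> V}"
    by blast
  then have "subspace_gap U W = subspace_gap U V"
    unfolding subspace_gap_def by (rule arg_cong)
  with assms(1) show ?thesis
    by simp
qed

context
  fixes T :: "'a::real_normed_vector \<Rightarrow> 'a" and Y :: "'a set" and \<delta> C :: real
  assumes gap_estimate: "\<And>w z. w \<in> Y \<Longrightarrow> z \<in> Y \<Longrightarrow> \<delta> * norm w \<le> norm (w - T z)"
    and lower_bound: "\<And>y. y \<in> Y \<Longrightarrow> norm y \<le> C * norm (T y)"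
    and \<delta>_pos: "\<delta> > 0" and C_nonneg: "C \<ge> 0"
begin

lemma norm_le_of_gap_estimate:
  assumes "w \<in> Y" "z \<in> Y"
  shows "norm z \<le> C * (1 + 1 / \<delta>) * norm (w - T z)"
proof -
  have "norm (T z) \<le> norm w + norm (w - T z)"
    using norm_triangle_ineq4[of w "w - T z"] by simp
  also have "norm w \<le> norm (w - T z) / \<delta>"
    using gap_estimate[OF assms] \<delta>_pos by (simp add: pos_le_divide_eq mult.commute)
  finally have "norm (T z) \<le> (1 + 1 / \<delta>) * norm (w - T z)"
    by (simp add: field_simps)
  with lower_bound[OF \<open>z \<in> Y\<close>] C_nonneg show ?thesis
    by (smt (verit) mult.assoc mult_left_mono)
qed

lemma perturbation_bounded_below:
  assumes "\<And>y. y \<in> Y \<Longrightarrow> A y \<in> Y" and "y \<in> Y"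
  shows "norm y \<le> C * (1 + 1 / \<delta>) * norm (T y - A y)"
  using norm_le_of_gap_estimate[of "A y" y] assms by (simp add: norm_minus_commute)

lemma perturbation_gap_estimate:
  assumes "subspace Y" and "\<And>y. y \<in> Y \<Longrightarrow> A y \<in> Y"
    and "\<And>y. y \<in> Y \<Longrightarrow> norm (A y) \<le> K * norm y" and "K \<ge> 0"
    and "u \<in> Y" "z \<in> Y"
  shows "norm u \<le> (1 / \<delta> + K * C * (1 + 1 / \<delta>)) * norm (u - (T z - A z))"
proof -
  define w where "w = u + A z"
  define N where "N = norm (u - (T z - A z))"
  have "w \<in> Y"
    using assms by (simp add: w_def subspace_add)
  have N: "N = norm (w - T z)"
    by (simp add: N_def w_def algebra_simps)
  have "norm u \<le> norm w + norm (A z)"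
    using norm_triangle_ineq4[of w "A z"] by (simp add: w_def)
  also have "norm w \<le> N / \<delta>"
    using gap_estimate[OF \<open>w \<in> Y\<close> \<open>z \<in> Y\<close>] \<delta>_pos N
    by (simp add: pos_le_divide_eq mult.commute)
  also have "norm (A z) \<le> K * (C * (1 + 1 / \<delta>) * N)"
    using assms(3)[OF \<open>z \<in> Y\<close>] norm_le_of_gap_estimate[OF \<open>w \<in> Y\<close> \<open>z \<in> Y\<close>] \<open>K \<ge> 0\<close> N
    by (smt (verit) mult_left_mono)
  finally show ?thesis
    by (simp add: N_def field_simps)
qed

end

theorem mainTheorem7:
  fixes sc :: "complex \<Rightarrow> 'a::banach \<Rightarrow> 'a"
    and T :: "'a \<Rightarrow> 'a"
    and Y :: "'a set"
  assumes "complex_scaling sc"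
    and "bounded_clinear_op sc T"
    and "csubspace sc Y" and "closed Y"
    and "iso_on T Y"
    and "subspace_gap Y (T ` Y) > 0"
  shows "\<forall>mu::complex. iso_on (\<lambda>x. T x - sc mu x) Y \<and>
            subspace_gap Y ((\<lambda>x. T x - sc mu x) ` Y) > 0"
proof
  fix mu :: complex
  let ?\<delta> = "subspace_gap Y (T ` Y)" and ?K = "cmod mu"
  have "linear T" "subspace Y" and sc_Y: "\<And>y. y \<in> Y \<Longrightarrow> sc mu y \<in> Y"
    using assms(2,3) by (auto simp: bounded_clinear_op_def csubspace_def bounded_linear.linear)
  have sc_norm: "\<And>y. norm (sc mu y) \<le> ?K * norm y"
    using assms(1) by (simp add: complex_scaling_def)
  obtain C where "C \<ge> 0" and lower: "\<And>y. y \<in> Y \<Longrightarrow> norm y \<le> C * norm (T y)"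
    using iso_on_nonneg_bound[OF assms(5)] by blast
  have gap: "?\<delta> * norm w \<le> norm (w - T z)" if "w \<in> Y" "z \<in> Y" for w z
    using subspace_gap_le[OF \<open>subspace Y\<close> linear_subspace_image[OF \<open>linear T\<close> \<open>subspace Y\<close>]]
      that by simp
  note perturbation = gap lower assms(6) \<open>C \<ge> 0\<close>
  have "iso_on (\<lambda>x. T x - sc mu x) Y"
    using \<open>linear T\<close> complex_scaling_linear[OF assms(1)] \<open>subspace Y\<close>
      perturbation_bounded_below[OF perturbation sc_Y]
    by (intro iso_onI linear_compose_sub) auto
  moreover have "subspace_gap Y ((\<lambda>x. T x - sc mu x) ` Y) > 0"
  proof (rule subspace_gap_posI)
    show "(\<lambda>x. T x - sc mu x) ` Y \<noteq> {}"
      using subspace_0[OF \<open>subspace Y\<close>] by blast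
    show "1 / ?\<delta> + ?K * C * (1 + 1 / ?\<delta>) > 0"
      using assms(6) \<open>C \<ge> 0\<close> by (intro add_pos_nonneg) auto
  qed (use assms(6) perturbation_gap_estimate[OF perturbation \<open>subspace Y\<close> sc_Y sc_norm] in auto)
  ultimately show "iso_on (\<lambda>x. T x - sc mu x) Y \<and> subspace_gap Y ((\<lambda>x. T x - sc mu x) ` Y) > 0"
    ..
qed

end
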